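(* Let $C\subset\mathbb{R}^N$ be closed and nonempty, let $h:\mathbb{R}^N\to\mathbb{R}$ be differentiable with $L$-Lipschitz gradient ($L>0$), and suppose $f:=h+\delta_C$ is a K\L{} function. Fix $\varepsilon>0$. Let $x^0\in\mathbb{R}^N$ and let $(x^k)$ be a bounded sequence generated by $$x^{k+1}\in\mathrm{proj}_C^{A_k}\big(x^k-\lambda_kA_k^{-1}\nabla h(x^k)\big),$$ where $A_k=P_k+\varepsilon I_N$, $P_k=\mathrm{proj}_{\mathcal S_+(\mathbb{R}^N)}(H_k)$ and $H_k\in\partial^2h(x^k)$, and the step sizes satisfy $0<\lambda_k\le\bar\lambda<\varepsilon/L$, $(\lambda_k)\notin\ell^1$, and $\sup_k\lambda_{k+1}/\lambda_k<+\infty$. Then $\sum_k\|x^{k+1}-x^k\|<\infty$ and $(x^k)$ converges to a critical point of $f$.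
   Context: $\delta_C$ is the indicator function of $C$ ($0$ on $C$, $+\infty$ outside). For a symmetric positive definite matrix $A$, $\mathrm{proj}_C^A(z)=\arg\min_{y\in C}\langle A(y-z),y-z\rangle$. $\mathcal S_+(\mathbb{R}^N)$ is the closed convex cone of symmetric positive semidefinite matrices and $\mathrm{proj}_{\mathcal S_+(\mathbb{R}^N)}$ the Frobenius-norm projection onto it. The generalized (Clarke) Hessian is $\partial^2h(x)=\mathrm{co}\{\lim_n\nabla^2h(x_n): \nabla h \text{ differentiable at } x_n,\ x_n\to x\}$. Critical point: $0\in\partial f(x)$, $\partial f$ the limiting Fréchet subdifferential. K\L{} function: proper lsc $f$ such that at every $x^*$ with $\partial f(x^* )\ne\emptyset$ there are $\eta\in]0,\infty]$, $\delta>0$ and a continuous concave $\varphi:[0,\eta[\to[0,\infty[$, $\varphi(0)=0$, $C^1$ with $\varphi'>0$ on $]0,\eta[$, with $\varphi'(f(x)-f(x^* ))\inf_{p\in\partial f(x)}\|p\|\ge1$ whenever $\|x-x^*\|<\delta$ and $f(x^* )<f(x)<f(x^* )+\eta$. *)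

theory Defs
  imports "HOL-Analysis.Analysis"
begin

definition plus_indicator :: "('a \<Rightarrow> real) \<Rightarrow> 'a set \<Rightarrow> 'a \<Rightarrow> ereal" where
  "plus_indicator h C x = (if x \<in> C then ereal (h x) else \<infinity>)"

definition frechet_subdiff :: "('a::real_inner \<Rightarrow> ereal) \<Rightarrow> 'a \<Rightarrow> 'a set" where
  "frechet_subdiff f x = {v. \<bar>f x\<bar> \<noteq> \<infinity> \<and>
     (\<forall>e>0. \<exists>d>0. \<forall>y. norm (y - x) < d \<longrightarrow>
        f y \<ge> f x + ereal (v \<bullet> (y - x) - e * norm (y - x)))}"

definition lim_subdiff :: "('a::real_inner \<Rightarrow> ereal) \<Rightarrow> 'a \<Rightarrow> 'a set" where
  "lim_subdiff f x = {v. \<exists>xs vs. xs \<longlonglongrightarrow> x \<and> (\<lambda>n. f (xs n)) \<longlonglongrightarrow> f x \<and>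
     (\<forall>n. vs n \<in> frechet_subdiff f (xs n)) \<and> vs \<longlonglongrightarrow> v}"

definition proper_fun :: "('a \<Rightarrow> ereal) \<Rightarrow> bool" where
  "proper_fun f \<longleftrightarrow> (\<forall>x. f x \<noteq> -\<infinity>) \<and> (\<exists>x. f x < \<infinity>)"

definition lsc_fun :: "('a::topological_space \<Rightarrow> ereal) \<Rightarrow> bool" where
  "lsc_fun f \<longleftrightarrow> (\<forall>x. f x \<le> Liminf (at x) f)"

definition KL_function :: "('a::real_inner \<Rightarrow> ereal) \<Rightarrow> bool" where
  "KL_function f \<longleftrightarrow> proper_fun f \<and> lsc_fun f \<and>
    (\<forall>xs. lim_subdiff f xs \<noteq> {} \<longrightarrow>
      (\<exists>(\<eta>::ereal) (\<delta>::real) (\<phi>::real \<Rightarrow> real) \<phi>'.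
         0 < \<eta> \<and> 0 < \<delta> \<and>
         continuous_on {t. 0 \<le> t \<and> ereal t < \<eta>} \<phi> \<and>
         concave_on {t. 0 \<le> t \<and> ereal t < \<eta>} \<phi> \<and>
         \<phi> 0 = 0 \<and> (\<forall>t. 0 \<le> t \<and> ereal t < \<eta> \<longrightarrow> 0 \<le> \<phi> t) \<and>
         (\<forall>t. 0 < t \<and> ereal t < \<eta> \<longrightarrow> (\<phi> has_real_derivative \<phi>' t) (at t) \<and> 0 < \<phi>' t) \<and>
         continuous_on {t. 0 < t \<and> ereal t < \<eta>} \<phi>' \<and>
         (\<forall>x. norm (x - xs) < \<delta> \<and> f xs < f x \<and> f x < f xs + \<eta> \<longrightarrow>
            ereal (\<phi>' (real_of_ereal (f x - f xs))) * (INF p\<in>lim_subdiff f x. ereal (norm p)) \<ge> 1)))"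

text \<open>Generalized (Clarke) Hessian, in terms of the gradient g of h:
  convex hull of limits of Jacobians of g at points where g is differentiable.\<close>
definition clarke_hessian :: "(real^'n \<Rightarrow> real^'n) \<Rightarrow> real^'n \<Rightarrow> (real^'n^'n) set" where
  "clarke_hessian g x = convex hull {M. \<exists>xs Ms.
      (\<forall>n. (g has_derivative (\<lambda>v. Ms n *v v)) (at (xs n))) \<and> xs \<longlonglongrightarrow> x \<and> Ms \<longlonglongrightarrow> M}"

text \<open>Cone of symmetric positive semidefinite matrices; the norm on real^'n^'n is Frobenius.\<close>
definition psd_cone :: "(real^'n^'n) set" where
  "psd_cone = {M. transpose M = M \<and> (\<forall>v. 0 \<le> v \<bullet> (M *v v))}"

definition proj_psd :: "real^'n^'n \<Rightarrow> real^'n^'n" where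
  "proj_psd H = closest_point psd_cone H"

definition proj_metric :: "(real^'n) set \<Rightarrow> real^'n^'n \<Rightarrow> real^'n \<Rightarrow> (real^'n) set" where
  "proj_metric C A z = {y \<in> C. \<forall>y'\<in>C. (A *v (y - z)) \<bullet> (y - z) \<le> (A *v (y' - z)) \<bullet> (y' - z)}"

end

theory Submission
  imports Defs
begin

text \<open>
  The proof has two independent halves.  The first half is about a single step of the
  scheme: since \<nabla>h is L-Lipschitz, every generalized Hessian has entries bounded by L,
  so the metrics A_k are uniformly bounded above (and below by \<epsilon>).  From the optimality
  of the A_k-projection and the descent lemma we get, with constants c, b > 0 independent
  of k, (i) sufficient decrease  h(x(k+1)) \<le> h(x k) - c |x(k+1) - x k|^2 / lam k  and
  (ii) a relative error bound: some Frechet subgradient of h + \<delta>_C at x(k+1) has norm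
  at most  b |x(k+1) - x k| / lam k.
  The second half is an abstract convergence theorem for any bounded sequence with these
  two properties, driven by the KL inequality: the decrease makes \<Sum> |x(k+1)-x k|^2/lam k
  finite; since \<Sum> lam k = \<infinity>, the quotients |x(k+1)-x k|/lam k have a subsequence tending
  to 0, which yields a critical cluster point; near it the KL inequality combined with the
  bounded ratio lam(k+1)/lam k gives the recursion 2 D k \<le> D(k-1) + K (\<Phi> k - \<Phi>(k+1)) for
  the step lengths D, which telescopes to finite length and hence convergence.
\<close>

section \<open>The descent lemma\<close>

text \<open>For a function with L-Lipschitz gradient the first-order Taylor error is bounded by
  L/2 |y-x|^2 in absolute value; the sign s selects the upper or the lower bound.\<close>
lemma descent_lemma_signed:
  fixes h :: "'a::real_inner \<Rightarrow> real" and g :: "'a \<Rightarrow> 'a"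
  assumes grad: "\<And>y. (h has_derivative (\<lambda>v. g y \<bullet> v)) (at y)"
    and lip: "L-lipschitz_on UNIV g" and s: "s = 1 \<or> s = -1"
  shows "s * (h y - h x - g x \<bullet> (y - x)) \<le> L / 2 * (norm (y - x))^2"
proof -
  define d where "d = y - x"
  define \<psi> where "\<psi> t = s * (h (x + t *\<^sub>R d) - t * (g x \<bullet> d)) - L/2 * t^2 * (norm d)^2" for t
  define \<psi>' where "\<psi>' t = s * (g (x + t *\<^sub>R d) \<bullet> d - g x \<bullet> d) - L * t * (norm d)^2" for t
  have der: "DERIV \<psi> t :> \<psi>' t" for t
  proof -
    have "((\<lambda>t. x + t *\<^sub>R d) has_derivative (\<lambda>u. u *\<^sub>R d)) (at t)"
      by (auto intro!: derivative_eq_intros)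
    from has_derivative_compose[OF this grad]
    have "((\<lambda>t. h (x + t *\<^sub>R d)) has_derivative (\<lambda>u. u * (g (x + t *\<^sub>R d) \<bullet> d))) (at t)"
      by (simp add: mult.commute)
    then have "((\<lambda>t. h (x + t *\<^sub>R d)) has_real_derivative (g (x + t *\<^sub>R d) \<bullet> d)) (at t)"
      by (simp add: has_field_derivative_def mult_commute_abs)
    then show ?thesis unfolding \<psi>_def \<psi>'_def
      by (auto intro!: derivative_eq_intros simp: power2_eq_square algebra_simps)
  qed
  have nonpos: "\<psi>' t \<le> 0" if "0 \<le> t" for t
  proof -
    have "s * (g (x + t *\<^sub>R d) \<bullet> d - g x \<bullet> d) = s * ((g (x + t *\<^sub>R d) - g x) \<bullet> d)"
      by (simp add: inner_diff_left)
    also have "\<dots> \<le> norm (g (x + t *\<^sub>R d) - g x) * norm d"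
      using s Cauchy_Schwarz_ineq2[of "g (x + t *\<^sub>R d) - g x" d] by (auto simp: abs_le_iff)
    also have "\<dots> \<le> (L * norm (t *\<^sub>R d)) * norm d"
      using lipschitz_onD[OF lip, of "x + t *\<^sub>R d" x] by (auto simp: dist_norm intro!: mult_right_mono)
    also have "\<dots> = L * t * (norm d)^2" using that by (simp add: power2_eq_square)
    finally show ?thesis unfolding \<psi>'_def by simp
  qed
  obtain z where "0 < z" "z < 1" "\<psi> 1 - \<psi> 0 = (1 - 0) * \<psi>' z"
    using MVT2[of 0 1 \<psi> \<psi>'] der by auto
  then have "\<psi> 1 \<le> \<psi> 0" using nonpos[of z] by simp
  then show ?thesis unfolding \<psi>_def d_def by (simp add: algebra_simps)
qed

lemma descent_upper:
  fixes h :: "'a::real_inner \<Rightarrow> real" and g :: "'a \<Rightarrow> 'a"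
  assumes "\<And>y. (h has_derivative (\<lambda>v. g y \<bullet> v)) (at y)" "L-lipschitz_on UNIV g"
  shows "h y \<le> h x + g x \<bullet> (y - x) + L / 2 * (norm (y - x))^2"
  using descent_lemma_signed[OF assms, of 1 y x] by simp

lemma descent_lower:
  fixes h :: "'a::real_inner \<Rightarrow> real" and g :: "'a \<Rightarrow> 'a"
  assumes "\<And>y. (h has_derivative (\<lambda>v. g y \<bullet> v)) (at y)" "L-lipschitz_on UNIV g"
  shows "h y \<ge> h x + g x \<bullet> (y - x) - L / 2 * (norm (y - x))^2"
  using descent_lemma_signed[OF assms, of "-1" y x] by simp

section \<open>Uniform bound on the metrics A_k\<close>

lemma jacobian_norm_le_lipschitz:
  fixes g :: "real^'n \<Rightarrow> real^'m" and M :: "real^'n^'m"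
  assumes d: "(g has_derivative (\<lambda>v. M *v v)) (at z)" and lip: "L-lipschitz_on UNIV g"
  shows "norm (M *v v) \<le> L * norm v"
proof (cases "v = 0")
  case True then show ?thesis by simp
next
  case False
  hence nv: "norm v > 0" by simp
  show ?thesis
  proof (rule field_le_epsilon)
    fix e :: real assume e: "e > 0"
    obtain dd where dd: "dd > 0" and approx: "\<And>y. norm (y - z) < dd \<Longrightarrow>
        norm (g y - g z - M *v (y - z)) \<le> (e / norm v) * norm (y - z)"
      using d[unfolded has_derivative_at_alt] e nv by (meson divide_pos_pos)
    define t where "t = dd / 2 / norm v"
    have t: "t > 0" using dd nv by (simp add: t_def)
    have ntv: "norm (t *\<^sub>R v) = dd / 2" using nv dd by (simp add: t_def)
    have err: "norm (g (z + t *\<^sub>R v) - g z - M *v (t *\<^sub>R v)) \<le> (e / norm v) * norm (t *\<^sub>R v)"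
      using approx[of "z + t *\<^sub>R v"] ntv dd by simp
    have diff: "norm (g (z + t *\<^sub>R v) - g z) \<le> L * norm (t *\<^sub>R v)"
      using lipschitz_onD[OF lip, of "z + t *\<^sub>R v" z] by (simp add: dist_norm)
    have "norm (M *v (t *\<^sub>R v)) \<le> norm (g (z + t *\<^sub>R v) - g z)
        + norm (g (z + t *\<^sub>R v) - g z - M *v (t *\<^sub>R v))"
      by (metis norm_triangle_ineq4 diff_diff_eq2 add_diff_cancel_left' norm_minus_commute
          order_trans order_refl norm_triangle_sub)
    also have "\<dots> \<le> L * norm (t *\<^sub>R v) + (e / norm v) * norm (t *\<^sub>R v)" using err diff by simp
    finally have "t * norm (M *v v) \<le> t * (L * norm v + e)"
      using t nv by (simp add: matrix_vector_mult_scaleR algebra_simps)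
    thus "norm (M *v v) \<le> L * norm v + e" using t by simp
  qed
qed

text \<open>The cone of positive semidefinite matrices is closed and contains 0, so the
  projection proj_psd is a genuine nearest point.\<close>
lemma psd_cone_closed: "closed (psd_cone :: (real^'n^'n) set)"
proof -
  have "psd_cone = {M::real^'n^'n. \<forall>i j. M$i$j = M$j$i} \<inter> (\<Inter>v. {M. 0 \<le> v \<bullet> (M *v v)})"
    by (auto simp: psd_cone_def transpose_def vec_eq_iff)
  moreover have "closed {M::real^'n^'n. \<forall>i j. M$i$j = M$j$i}"
    by (intro closed_Collect_all closed_Collect_eq continuous_intros)
  moreover have "closed {M::real^'n^'n. 0 \<le> v \<bullet> (M *v v)}" for v :: "real^'n"
    unfolding inner_vec_def matrix_vector_mult_def
    by (intro closed_Collect_le continuous_intros)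
  ultimately show ?thesis by (metis (no_types, lifting) closed_Int closed_INT)
qed

lemma psd_cone_zero: "0 \<in> psd_cone"
  by (simp add: psd_cone_def transpose_def vec_eq_iff)

lemma proj_psd_in: "proj_psd H \<in> psd_cone"
  unfolding proj_psd_def using psd_cone_closed psd_cone_zero
  by (intro closest_point_in_set) auto

text \<open>Since 0 is in the cone, the projection moves H by at most |H|.\<close>
lemma proj_psd_norm: "norm (proj_psd H) \<le> 2 * norm H"
proof -
  have "dist H (proj_psd H) \<le> dist H 0"
    unfolding proj_psd_def using psd_cone_closed psd_cone_zero by (rule closest_point_le)
  hence "norm (H - proj_psd H) \<le> norm H" by (simp add: dist_norm)
  moreover have "norm (proj_psd H) \<le> norm H + norm (H - proj_psd H)"
    by (metis add_diff_cancel_left' diff_add_cancel norm_triangle_ineq4 norm_minus_commute)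
  ultimately show ?thesis by simp
qed

lemma norm_le_entry_sum: "norm (M::real^'n^'m) \<le> (\<Sum>i\<in>UNIV. \<Sum>j\<in>UNIV. \<bar>M$i$j\<bar>)"
proof -
  have "norm M \<le> (\<Sum>i\<in>UNIV. \<bar>norm (M$i)\<bar>)"
    unfolding norm_vec_def by (simp add: L2_set_le_sum)
  also have "\<dots> \<le> (\<Sum>i\<in>UNIV. \<Sum>j\<in>UNIV. \<bar>M$i$j\<bar>)"
    by (intro sum_mono) (simp add: norm_le_l1_cart)
  finally show ?thesis .
qed

lemma entry_le_norm: "\<bar>(M::real^'n^'m)$i$j\<bar> \<le> norm M"
  using component_le_norm_cart[of "M$i" j] Finite_Cartesian_Product.norm_nth_le[of M i] by linarith

text \<open>Every generalized Hessian of h has entries bounded by L: Jacobians of the gradient do,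
  and the entrywise bound is preserved under limits and convex combinations.\<close>
lemma clarke_hessian_entries:
  fixes g :: "real^'n \<Rightarrow> real^'n"
  assumes lip: "L-lipschitz_on UNIV g" and H: "H \<in> clarke_hessian g z"
  shows "\<bar>H$i$j\<bar> \<le> L"
proof -
  let ?E = "{M::real^'n^'n. \<forall>i j. \<bar>M$i$j\<bar> \<le> L}"
  have closed: "closed ?E"
    by (intro closed_Collect_all closed_Collect_le continuous_intros)
  have convex: "convex ?E"
    unfolding convex_def
  proof (safe)
    fix M N :: "real^'n^'n" and u v :: real and i j
    assume bnd: "\<forall>i j. \<bar>M$i$j\<bar> \<le> L" "\<forall>i j. \<bar>N$i$j\<bar> \<le> L" and uv: "0 \<le> u" "0 \<le> v" "u + v = 1"
    have "\<bar>u * M$i$j + v * N$i$j\<bar> \<le> u * \<bar>M$i$j\<bar> + v * \<bar>N$i$j\<bar>"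
      using uv by (simp add: abs_triangle_ineq[THEN order_trans] abs_mult)
    also have "\<dots> \<le> u * L + v * L" using bnd uv by (intro add_mono mult_left_mono) auto
    finally show "\<bar>(u *\<^sub>R M + v *\<^sub>R N) $ i $ j\<bar> \<le> L" using uv by (simp add: distrib_right[symmetric])
  qed
  have "M \<in> ?E" if "\<forall>n. (g has_derivative (\<lambda>v. Ms n *v v)) (at (xs n))" "Ms \<longlonglongrightarrow> M" for M Ms xs
  proof (rule closed_sequentially[OF closed _ that(2)])
    fix n
    have "onorm ((*v) (Ms n)) \<le> L"
      using jacobian_norm_le_lipschitz[OF that(1)[rule_format, of n] lip] by (intro onorm_le) auto
    thus "Ms n \<in> ?E" using matrix_component_le_onorm[of "Ms n"] by (auto intro: order_trans)
  qed
  hence "clarke_hessian g z \<subseteq> ?E"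
    unfolding clarke_hessian_def by (intro hull_minimal convex) blast
  thus ?thesis using H by blast
qed

lemma proj_clarke_hessian_bound:
  fixes g :: "real^'n \<Rightarrow> real^'n"
  assumes lip: "L-lipschitz_on UNIV g" and L: "L \<ge> 0"
  obtains R where "R \<ge> 0"
    "\<And>z H u. H \<in> clarke_hessian g z \<Longrightarrow> norm (proj_psd H *v u) \<le> R * norm u"
proof
  define N where "N = real CARD('n)"
  define R where "R = N * N * (2 * (N * N * L))"
  show "R \<ge> 0" using L by (simp add: R_def N_def)
  fix z H u assume H: "H \<in> clarke_hessian g z"
  have "norm H \<le> (\<Sum>i\<in>UNIV. \<Sum>j\<in>UNIV. \<bar>H $ i $ j\<bar>)" by (rule norm_le_entry_sum)
  also have "\<dots> \<le> (\<Sum>i\<in>(UNIV::'n set). \<Sum>j\<in>(UNIV::'n set). L)"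
    using clarke_hessian_entries[OF lip H] by (intro sum_mono) auto
  also have "\<dots> = N * N * L" by (simp add: N_def)
  finally have "norm H \<le> N * N * L" .
  hence "\<bar>proj_psd H $ i $ j\<bar> \<le> 2 * (N * N * L)" for i j
    using entry_le_norm[of "proj_psd H" i j] proj_psd_norm[of H] by linarith
  hence "onorm ((*v) (proj_psd H)) \<le> R"
    unfolding R_def N_def by (rule onorm_le_matrix_component)
  then show "norm (proj_psd H *v u) \<le> R * norm u"
    using onorm[OF matrix_vector_mul_bounded_linear, of "proj_psd H" u] by (meson mult_right_mono norm_ge_zero order_trans)
qed

section \<open>One step of the scheme\<close>

lemma shifted_metric:
  fixes P :: "real^'n^'n"
  assumes P: "P \<in> psd_cone" and e: "\<epsilon> > 0"
  defines "A \<equiv> P + \<epsilon> *\<^sub>R mat 1"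
  shows shifted_metric_sym: "(A *v u) \<bullet> w = u \<bullet> (A *v w)"
    and shifted_metric_coercive: "\<epsilon> * (norm u)^2 \<le> (A *v u) \<bullet> u"
    and shifted_metric_inv: "A *v (matrix_inv A *v w) = w"
proof -
  have tP: "transpose P = P" and pP: "\<And>v. 0 \<le> v \<bullet> (P *v v)" using P by (auto simp: psd_cone_def)
  have Au: "A *v u = P *v u + \<epsilon> *\<^sub>R u" for u
    by (simp add: A_def matrix_vector_mult_add_rdistrib scaleR_matrix_vector_assoc[symmetric])
  have "(P *v u) \<bullet> w = u \<bullet> (P *v w)" for u w
    using dot_lmul_matrix[of u P w] vector_transpose_matrix[of u P] tP by simp
  then show "(A *v u) \<bullet> w = u \<bullet> (A *v w)"
    by (simp add: Au inner_add_left inner_add_right inner_commute)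
  have coercive: "\<epsilon> * (norm u)^2 \<le> (A *v u) \<bullet> u" for u
  proof -
    have "(A *v u) \<bullet> u = u \<bullet> (P *v u) + \<epsilon> * (u \<bullet> u)"
      unfolding Au by (simp only: inner_add_left inner_scaleR_left) (simp add: inner_commute)
    thus ?thesis using pP[of u] by (simp add: power2_norm_eq_inner)
  qed
  then show "\<epsilon> * (norm u)^2 \<le> (A *v u) \<bullet> u" .
  have inj: "inj ((*v) A)"
  proof (rule injI)
    fix a b assume "A *v a = A *v b"
    hence "A *v (a - b) = 0" by (simp add: matrix_vector_mult_diff_distrib)
    hence "\<epsilon> * (norm (a - b))^2 \<le> 0" using coercive[of "a - b"] by simp
    thus "a = b" using e by (simp add: mult_le_0_iff)
  qed
  have "surj ((*v) A)"
    using linear_injective_imp_surjective[OF matrix_vector_mul_linear inj] by simp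
  hence "invertible A" using inj invertible_eq_bij bij_def by blast
  hence "\<exists>A'. A ** A' = mat 1 \<and> A' ** A = mat 1" by (simp add: invertible_def)
  hence "A ** matrix_inv A = mat 1" unfolding matrix_inv_def by (rule someI2_ex) auto
  thus "A *v (matrix_inv A *v w) = w" by (simp add: matrix_vector_mul_assoc)
qed

lemma shifted_metric_upper:
  fixes P :: "real^'n^'n"
  assumes R: "\<And>u. norm (P *v u) \<le> R * norm u" and e: "\<epsilon> > 0"
  shows "norm ((P + \<epsilon> *\<^sub>R mat 1) *v u) \<le> (R + \<epsilon>) * norm u"
    and "((P + \<epsilon> *\<^sub>R mat 1) *v u) \<bullet> u \<le> (R + \<epsilon>) * (norm u)^2"
proof -
  have "(P + \<epsilon> *\<^sub>R mat 1) *v u = P *v u + \<epsilon> *\<^sub>R u"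
    by (simp add: matrix_vector_mult_add_rdistrib scaleR_matrix_vector_assoc[symmetric])
  hence "norm ((P + \<epsilon> *\<^sub>R mat 1) *v u) \<le> norm (P *v u) + \<epsilon> * norm u" using e
    by (metis abs_of_pos norm_scaleR norm_triangle_ineq)
  thus bound: "norm ((P + \<epsilon> *\<^sub>R mat 1) *v u) \<le> (R + \<epsilon>) * norm u"
    using R[of u] by (simp add: distrib_right)
  have "((P + \<epsilon> *\<^sub>R mat 1) *v u) \<bullet> u \<le> norm ((P + \<epsilon> *\<^sub>R mat 1) *v u) * norm u"
    by (rule norm_cauchy_schwarz)
  also have "\<dots> \<le> (R + \<epsilon>) * norm u * norm u" using bound by (simp add: mult_right_mono)
  finally show "((P + \<epsilon> *\<^sub>R mat 1) *v u) \<bullet> u \<le> (R + \<epsilon>) * (norm u)^2"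
    by (simp add: power2_eq_square mult.assoc)
qed

text \<open>Optimality of the A-projection of x - lam A^{-1} gx, rewritten as minimality over C of
  the model  y' \<mapsto> <A(y'-x), y'-x> + 2 lam <gx, y'-x>.\<close>
lemma proj_metric_step_optimal:
  fixes P :: "real^'n^'n"
  assumes P: "P \<in> psd_cone" and e: "\<epsilon> > 0"
    and y: "y \<in> proj_metric C (P + \<epsilon> *\<^sub>R mat 1) (x - lam *\<^sub>R (matrix_inv (P + \<epsilon> *\<^sub>R mat 1) *v gx))"
    and y': "y' \<in> C"
  shows "((P + \<epsilon> *\<^sub>R mat 1) *v (y - x)) \<bullet> (y - x) + 2 * lam * (gx \<bullet> (y - x))
     \<le> ((P + \<epsilon> *\<^sub>R mat 1) *v (y' - x)) \<bullet> (y' - x) + 2 * lam * (gx \<bullet> (y' - x))"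
proof -
  define A where "A = P + \<epsilon> *\<^sub>R mat 1"
  define w where "w = matrix_inv A *v gx"
  have Aw: "A *v w = gx" unfolding w_def A_def by (rule shifted_metric_inv[OF P e])
  have expand: "(A *v (u + lam *\<^sub>R w)) \<bullet> (u + lam *\<^sub>R w)
      = (A *v u) \<bullet> u + 2 * lam * (gx \<bullet> u) + lam^2 * (gx \<bullet> w)" for u
  proof -
    have "A *v (u + lam *\<^sub>R w) = A *v u + lam *\<^sub>R gx"
      by (simp add: matrix_vector_right_distrib matrix_vector_mult_scaleR Aw)
    hence "(A *v (u + lam *\<^sub>R w)) \<bullet> (u + lam *\<^sub>R w)
        = (A *v u) \<bullet> u + lam * ((A *v u) \<bullet> w) + lam * (gx \<bullet> u) + lam^2 * (gx \<bullet> w)"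
      by (simp only: inner_add_left inner_add_right inner_scaleR_left inner_scaleR_right power2_eq_square)
        (simp add: algebra_simps)
    moreover have "(A *v u) \<bullet> w = gx \<bullet> u"
      using shifted_metric_sym[OF P e, of u w] Aw by (simp add: A_def inner_commute)
    ultimately show ?thesis by simp
  qed
  have "(A *v (y - (x - lam *\<^sub>R w))) \<bullet> (y - (x - lam *\<^sub>R w))
      \<le> (A *v (y' - (x - lam *\<^sub>R w))) \<bullet> (y' - (x - lam *\<^sub>R w))"
    using y y' by (auto simp: proj_metric_def A_def w_def)
  moreover have "y - (x - lam *\<^sub>R w) = (y - x) + lam *\<^sub>R w" "y' - (x - lam *\<^sub>R w) = (y' - x) + lam *\<^sub>R w"
    by (simp_all add: algebra_simps)
  ultimately show ?thesis using expand[of "y - x"] expand[of "y' - x"] unfolding A_def by simp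
qed

lemma frechet_subdiff_of_quadratic_minorant:
  fixes h :: "'a::real_inner \<Rightarrow> real"
  assumes x: "x \<in> C" and K: "K \<ge> 0"
    and q: "\<And>y. y \<in> C \<Longrightarrow> h y \<ge> h x + v \<bullet> (y - x) - K * (norm (y - x))^2"
  shows "v \<in> frechet_subdiff (plus_indicator h C) x"
  unfolding frechet_subdiff_def
proof (rule CollectI, intro conjI allI impI)
  show "\<bar>plus_indicator h C x\<bar> \<noteq> \<infinity>" using x by (simp add: plus_indicator_def)
  fix e :: real assume e: "e > 0"
  show "\<exists>d>0. \<forall>y. norm (y - x) < d \<longrightarrow>
        plus_indicator h C x + ereal (v \<bullet> (y - x) - e * norm (y - x)) \<le> plus_indicator h C y"
  proof (intro exI[of _ "e / (K + 1)"] conjI allI impI)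
    show "e / (K + 1) > 0" using e K by simp
    fix y assume y: "norm (y - x) < e / (K + 1)"
    show "plus_indicator h C x + ereal (v \<bullet> (y - x) - e * norm (y - x)) \<le> plus_indicator h C y"
    proof (cases "y \<in> C")
      case False thus ?thesis by (simp add: plus_indicator_def)
    next
      case True
      have "K * norm (y - x) \<le> (K + 1) * norm (y - x)" by (simp add: distrib_right)
      also have "\<dots> \<le> e" using y K by (simp add: pos_less_divide_eq mult.commute less_imp_le)
      finally have "K * (norm (y - x))^2 \<le> e * norm (y - x)"
        by (simp add: power2_eq_square mult.assoc[symmetric] mult_right_mono)
      hence "h x + (v \<bullet> (y - x) - e * norm (y - x)) \<le> h y" using q[OF True] by linarith
      thus ?thesis using True x by (simp add: plus_indicator_def)
    qed
  qed
qed

lemma frechet_subdiff_imp_lim_subdiff: "v \<in> frechet_subdiff f x \<Longrightarrow> v \<in> lim_subdiff f x"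
  unfolding lim_subdiff_def by (intro CollectI exI[of _ "\<lambda>_. x"] exI[of _ "\<lambda>_. v"]) auto

text \<open>Sufficient decrease: comparing the new point with the feasible old point x in the
  optimality inequality, then applying the descent lemma.\<close>
lemma prox_step_decrease:
  fixes h :: "real^'n \<Rightarrow> real" and g :: "real^'n \<Rightarrow> real^'n" and P :: "real^'n^'n"
  assumes grad: "\<And>y. (h has_derivative (\<lambda>v. g y \<bullet> v)) (at y)" and lip: "L-lipschitz_on UNIV g"
    and P: "P \<in> psd_cone" and e: "\<epsilon> > 0" and lam: "lam > 0"
    and y: "y \<in> proj_metric C (P + \<epsilon> *\<^sub>R mat 1) (x - lam *\<^sub>R (matrix_inv (P + \<epsilon> *\<^sub>R mat 1) *v g x))"
    and x: "x \<in> C"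
  shows "h y \<le> h x - (\<epsilon> - L * lam) / 2 * (norm (y - x))^2 / lam"
proof -
  define d where "d = y - x"
  have "((P + \<epsilon> *\<^sub>R mat 1) *v d) \<bullet> d + 2 * lam * (g x \<bullet> d) \<le> 0"
    using proj_metric_step_optimal[OF P e y x] by (simp add: d_def)
  hence "\<epsilon> * (norm d)^2 + 2 * lam * (g x \<bullet> d) \<le> 0"
    using shifted_metric_coercive[OF P e, of d] by linarith
  hence "g x \<bullet> d \<le> - (\<epsilon> / lam) * (norm d)^2 / 2" using lam by (simp add: field_simps)
  moreover have "h y \<le> h x + g x \<bullet> d + L / 2 * (norm d)^2"
    using descent_upper[OF grad lip, of y x] by (simp add: d_def)
  ultimately have "h y \<le> h x - (\<epsilon> / lam - L) / 2 * (norm d)^2" by (simp add: field_simps)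
  moreover have "(\<epsilon> / lam - L) / 2 * (norm d)^2 = (\<epsilon> - L * lam) / 2 * (norm d)^2 / lam"
    using lam by (simp add: field_simps)
  ultimately show ?thesis by (simp add: d_def)
qed

text \<open>Relative error: v = \<nabla>h(y) - \<nabla>h(x) - A(y-x)/lam is a Frechet subgradient of h + \<delta>_C
  at the new point y, because the optimality inequality and the lower descent lemma
  give a quadratic minorant with slope v.\<close>
lemma prox_step_subgradient:
  fixes h :: "real^'n \<Rightarrow> real" and g :: "real^'n \<Rightarrow> real^'n" and P :: "real^'n^'n"
  assumes grad: "\<And>y. (h has_derivative (\<lambda>v. g y \<bullet> v)) (at y)"
    and lip: "L-lipschitz_on UNIV g" and L: "L \<ge> 0"
    and P: "P \<in> psd_cone" and e: "\<epsilon> > 0" and lam: "lam > 0"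
    and R: "\<And>u. norm (P *v u) \<le> R * norm u" and R0: "R \<ge> 0"
    and y: "y \<in> proj_metric C (P + \<epsilon> *\<^sub>R mat 1) (x - lam *\<^sub>R (matrix_inv (P + \<epsilon> *\<^sub>R mat 1) *v g x))"
  shows "\<exists>v\<in>frechet_subdiff (plus_indicator h C) y. norm v \<le> (L * lam + R + \<epsilon>) * norm (y - x) / lam"
proof
  define A where "A = P + \<epsilon> *\<^sub>R mat 1"
  define d where "d = y - x"
  define v where "v = g y - g x - (1 / lam) *\<^sub>R (A *v d)"
  note opt = proj_metric_step_optimal[OF P e y, folded A_def]
  note upper = shifted_metric_upper[OF R e, folded A_def]
  have yC: "y \<in> C" using y by (simp add: proj_metric_def)
  show "v \<in> frechet_subdiff (plus_indicator h C) y"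
  proof (rule frechet_subdiff_of_quadratic_minorant[OF yC, of "L / 2 + (R + \<epsilon>) / (2 * lam)"])
    show "0 \<le> L / 2 + (R + \<epsilon>) / (2 * lam)" using L R0 e lam by simp
    fix y' assume y': "y' \<in> C"
    define u where "u = y' - y"
    have sq: "(A *v (d + u)) \<bullet> (d + u) = (A *v d) \<bullet> d + 2 * ((A *v d) \<bullet> u) + (A *v u) \<bullet> u"
      using shifted_metric_sym[OF P e, of u d]
      by (simp add: A_def matrix_vector_right_distrib inner_add_left inner_add_right inner_commute)
    have "(A *v d) \<bullet> d + 2 * lam * (g x \<bullet> d) \<le> (A *v (d + u)) \<bullet> (d + u) + 2 * lam * (g x \<bullet> (d + u))"
      using opt[OF y'] by (simp add: d_def u_def)
    hence "0 \<le> 2 * ((A *v d) \<bullet> u) + (R + \<epsilon>) * (norm u)^2 + 2 * lam * (g x \<bullet> u)"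
      using upper(2)[of u] unfolding sq by (simp add: inner_add_right algebra_simps)
    hence "- (2 * ((A *v d) \<bullet> u) + 2 * lam * (g x \<bullet> u)) / (2 * lam) \<le> (R + \<epsilon>) * (norm u)^2 / (2 * lam)"
      using lam by (intro divide_right_mono) auto
    moreover have "- (2 * ((A *v d) \<bullet> u) + 2 * lam * (g x \<bullet> u)) / (2 * lam)
        = - (g x \<bullet> u) - (1 / lam) * ((A *v d) \<bullet> u)"
      using lam by (simp add: field_simps)
    ultimately have model: "- (g x \<bullet> u) - (1 / lam) * ((A *v d) \<bullet> u) \<le> (R + \<epsilon>) / (2 * lam) * (norm u)^2"
      by simp
    have "h y' \<ge> h y + g y \<bullet> u - L / 2 * (norm u)^2"
      using descent_lower[OF grad lip, of y y'] by (simp add: u_def)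
    with model show "h y + v \<bullet> (y' - y) - (L / 2 + (R + \<epsilon>) / (2 * lam)) * (norm (y' - y))^2 \<le> h y'"
      unfolding u_def[symmetric] by (simp add: v_def inner_diff_left algebra_simps)
  qed
  have "norm v \<le> norm (g y - g x) + norm ((1 / lam) *\<^sub>R (A *v d))"
    unfolding v_def by (rule norm_triangle_ineq4)
  also have "\<dots> \<le> L * norm d + (1 / lam) * ((R + \<epsilon>) * norm d)"
    using lipschitz_onD[OF lip, of y x] upper(1)[of d] lam
    by (intro add_mono) (auto simp: dist_norm d_def intro!: mult_left_mono divide_right_mono)
  finally show "norm v \<le> (L * lam + R + \<epsilon>) * norm (y - x) / lam"
    using lam by (simp add: d_def field_simps)
qed

lemma prox_step_uniform:
  fixes h :: "real^'n \<Rightarrow> real" and g :: "real^'n \<Rightarrow> real^'n" and P :: "real^'n^'n"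
  assumes grad: "\<And>y. (h has_derivative (\<lambda>v. g y \<bullet> v)) (at y)"
    and lip: "L-lipschitz_on UNIV g" and L: "L \<ge> 0"
    and P: "P \<in> psd_cone" and e: "\<epsilon> > 0" and lam: "0 < lam" "lam \<le> lbar"
    and R: "\<And>u. norm (P *v u) \<le> R * norm u" and R0: "R \<ge> 0"
    and y: "y \<in> proj_metric C (P + \<epsilon> *\<^sub>R mat 1) (x - lam *\<^sub>R (matrix_inv (P + \<epsilon> *\<^sub>R mat 1) *v g x))"
  shows "y \<in> C"
    and "\<exists>v\<in>frechet_subdiff (plus_indicator h C) y. norm v \<le> (L * lbar + R + \<epsilon>) * norm (y - x) / lam"
    and "x \<in> C \<Longrightarrow> h y \<le> h x - (\<epsilon> - L * lbar) / 2 * (norm (y - x))^2 / lam"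
proof -
  show "y \<in> C" using y by (simp add: proj_metric_def)
  have "L * lam \<le> L * lbar" using L lam by (simp add: mult_left_mono)
  then have b: "(L * lam + R + \<epsilon>) * norm (y - x) / lam \<le> (L * lbar + R + \<epsilon>) * norm (y - x) / lam"
    and c: "(\<epsilon> - L * lbar) / 2 * (norm (y - x))^2 / lam \<le> (\<epsilon> - L * lam) / 2 * (norm (y - x))^2 / lam"
    using lam by (auto intro!: divide_right_mono mult_right_mono)
  show "\<exists>v\<in>frechet_subdiff (plus_indicator h C) y. norm v \<le> (L * lbar + R + \<epsilon>) * norm (y - x) / lam"
    using prox_step_subgradient[OF grad lip L P e lam(1) R R0 y] b by (meson order_trans)
  show "x \<in> C \<Longrightarrow> h y \<le> h x - (\<epsilon> - L * lbar) / 2 * (norm (y - x))^2 / lam"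
    using prox_step_decrease[OF grad lip P e lam(1) y] c by linarith
qed

section \<open>Consequences of sufficient decrease for real sequences\<close>

lemma sufficient_decrease_summable:
  fixes F D mu :: "nat \<Rightarrow> real"
  assumes desc: "\<And>k. F (Suc k) \<le> F k - c * (D k)^2 / mu k" and c: "c > 0"
    and mu: "\<And>k. mu k > 0" and bdd: "bdd_below (range F)"
  shows "decseq F" and "summable (\<lambda>k. (D k)^2 / mu k)"
proof -
  have drop: "0 \<le> c * (D k)^2 / mu k" for k using c mu[of k] by simp
  show "decseq F"
  proof (rule decseq_SucI)
    show "F (Suc k) \<le> F k" for k using desc[of k] drop[of k] by linarith
  qed
  obtain B where B: "\<And>k. B \<le> F k" using bdd by (auto simp: bdd_below_def)
  have telescope: "c * (\<Sum>k<n. (D k)^2 / mu k) \<le> F 0 - F n" for n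
  proof (induction n)
    case (Suc n) thus ?case using desc[of n] by (simp add: distrib_left)
  qed simp
  show "summable (\<lambda>k. (D k)^2 / mu k)"
  proof (rule summableI_nonneg_bounded[where x = "(F 0 - B) / c"])
    show "0 \<le> (D k)^2 / mu k" for k using mu[of k] by simp
    show "(\<Sum>k<n. (D k)^2 / mu k) \<le> (F 0 - B) / c" for n
      using telescope[of n] B[of n] c by (simp add: field_simps)
  qed
qed

lemma weighted_steps_vanish:
  fixes D mu :: "nat \<Rightarrow> real"
  assumes sum: "summable (\<lambda>k. (D k)^2 / mu k)" and mu: "\<And>k. mu k > 0" "\<And>k. mu k \<le> lbar"
    and D: "\<And>k. D k \<ge> 0"
  shows "D \<longlonglongrightarrow> 0"
proof -
  have "summable (\<lambda>k. (D k)^2)"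
  proof (rule summable_comparison_test'[where g = "\<lambda>k. lbar * ((D k)^2 / mu k)" and N = 0])
    show "summable (\<lambda>k. lbar * ((D k)^2 / mu k))" using sum by (rule summable_mult)
    fix k
    have "(D k)^2 = mu k * ((D k)^2 / mu k)" using mu(1)[of k] by simp
    also have "\<dots> \<le> lbar * ((D k)^2 / mu k)" using mu[of k] by (intro mult_right_mono) auto
    finally show "norm ((D k)^2) \<le> lbar * ((D k)^2 / mu k)" by simp
  qed
  hence "(\<lambda>k. sqrt ((D k)^2)) \<longlonglongrightarrow> sqrt 0" by (intro tendsto_real_sqrt summable_LIMSEQ_zero)
  thus ?thesis using D by simp
qed

lemma subseq_tendsto_zero:
  fixes e :: "nat \<Rightarrow> real"
  assumes freq: "\<And>N d. d > 0 \<Longrightarrow> \<exists>k\<ge>N. e k < d" and nonneg: "\<And>k. e k \<ge> 0"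
  obtains s where "strict_mono s" "(\<lambda>n. e (s n)) \<longlonglongrightarrow> 0"
proof -
  have "\<forall>N n. \<exists>k. k \<ge> N \<and> e k < 1 / Suc n" using freq by simp
  then obtain f where f: "\<And>N n. f N n \<ge> N \<and> e (f N n) < 1 / Suc n" by metis
  define s where "s = rec_nat (f 0 0) (\<lambda>n r. f (Suc r) (Suc n))"
  have s0: "s 0 = f 0 0" and sS: "s (Suc n) = f (Suc (s n)) (Suc n)" for n by (simp_all add: s_def)
  have "strict_mono s" unfolding strict_mono_Suc_iff using f sS by (metis Suc_le_lessD)
  moreover have bound: "e (s n) < 1 / Suc n" for n
  proof (cases n)
    case 0 thus ?thesis using f[of 0 0] s0 by simp
  next
    case (Suc m) thus ?thesis using f[of "Suc (s m)" "Suc m"] sS[of m] by simp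
  qed
  have "(\<lambda>n. e (s n)) \<longlonglongrightarrow> 0"
  proof (rule tendsto_sandwich[of "\<lambda>_. 0" _ _ "\<lambda>n. 1 / real (Suc n)"])
    show "\<forall>\<^sub>F n in sequentially. 0 \<le> e (s n)" using nonneg by simp
    show "\<forall>\<^sub>F n in sequentially. e (s n) \<le> 1 / real (Suc n)" using bound by (simp add: less_imp_le)
    show "(\<lambda>n. 1 / real (Suc n)) \<longlonglongrightarrow> 0" by (rule LIMSEQ_Suc[OF lim_const_over_n])
  qed simp
  ultimately show ?thesis using that by blast
qed

text \<open>If D_k^2 / mu_k is summable but mu is not, the quotients D_k / mu_k cannot stay
  away from 0: otherwise mu_k \<le> (D_k / mu_k)^2 mu_k / d^2 = (D_k^2 / mu_k) / d^2 eventually.\<close>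
lemma step_quotients_subseq_zero:
  fixes D mu :: "nat \<Rightarrow> real"
  assumes sum: "summable (\<lambda>k. (D k)^2 / mu k)" and mu: "\<And>k. mu k > 0"
    and nsum: "\<not> summable mu" and D: "\<And>k. D k \<ge> 0"
  obtains s where "strict_mono s" "(\<lambda>n. D (s n) / mu (s n)) \<longlonglongrightarrow> 0"
proof (rule subseq_tendsto_zero)
  show "0 \<le> D k / mu k" for k using D[of k] mu[of k] by simp
  fix N and d :: real assume d: "d > 0"
  show "\<exists>k\<ge>N. D k / mu k < d"
  proof (rule ccontr)
    assume "\<not> ?thesis"
    hence ge: "\<And>k. k \<ge> N \<Longrightarrow> d \<le> D k / mu k" by (auto simp: not_less)
    have "summable mu"
    proof (rule summable_comparison_test'[where g = "\<lambda>k. (D k)^2 / mu k / d^2" and N = N])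
      show "summable (\<lambda>k. (D k)^2 / mu k / d^2)" using sum by (rule summable_divide)
      fix k assume k: "k \<ge> N"
      have "d^2 * mu k \<le> (D k / mu k)^2 * mu k"
        using ge[OF k] d mu[of k] by (intro mult_right_mono power_mono) auto
      also have "\<dots> = (D k)^2 / mu k" using mu[of k] by (simp add: power2_eq_square)
      finally show "norm (mu k) \<le> (D k)^2 / mu k / d^2" using mu[of k] d by (simp add: field_simps)
    qed
    thus False using nsum by simp
  qed
qed (use that in blast)

section \<open>The Kurdyka-Lojasiewicz argument\<close>

text \<open>The KL property at a critical point of h + \<delta>_C, restated for real values: the
  desingularizer lives on a real interval [0, \<eta>) and the inequality is read as
  1 \<le> \<phi>'(h z - h ys) |v| for every limiting subgradient v at nearby feasible z.\<close>
lemma KL_at_point: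
  fixes h :: "'a::real_inner \<Rightarrow> real"
  assumes KL: "KL_function (plus_indicator h C)" and ys: "ys \<in> C"
    and ne: "lim_subdiff (plus_indicator h C) ys \<noteq> {}"
  obtains \<eta> \<delta> :: real and \<phi> \<phi>' :: "real \<Rightarrow> real" where "0 < \<eta>" "0 < \<delta>"
    "continuous_on {0..<\<eta>} \<phi>" "concave_on {0..<\<eta>} \<phi>" "\<phi> 0 = 0"
    "\<And>t. t \<in> {0..<\<eta>} \<Longrightarrow> 0 \<le> \<phi> t"
    "\<And>t. t \<in> {0<..<\<eta>} \<Longrightarrow> (\<phi> has_real_derivative \<phi>' t) (at t) \<and> 0 < \<phi>' t"
    "\<And>z v. z \<in> C \<Longrightarrow> norm (z - ys) < \<delta> \<Longrightarrow> h ys < h z \<Longrightarrow> h z - h ys < \<eta> \<Longrightarrow>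
       v \<in> lim_subdiff (plus_indicator h C) z \<Longrightarrow> 1 \<le> \<phi>' (h z - h ys) * norm v"
proof -
  let ?f = "plus_indicator h C"
  from KL ne obtain \<eta>0 :: ereal and \<delta> \<phi> \<phi>' where
      \<eta>0: "0 < \<eta>0" and \<delta>: "0 < \<delta>" and
      cont: "continuous_on {t. 0 \<le> t \<and> ereal t < \<eta>0} \<phi>" and
      conc: "concave_on {t. 0 \<le> t \<and> ereal t < \<eta>0} \<phi>" and
      \<phi>0: "\<phi> 0 = 0" and nonneg: "\<forall>t. 0 \<le> t \<and> ereal t < \<eta>0 \<longrightarrow> 0 \<le> \<phi> t" and
      der: "\<forall>t. 0 < t \<and> ereal t < \<eta>0 \<longrightarrow> (\<phi> has_real_derivative \<phi>' t) (at t) \<and> 0 < \<phi>' t" and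
      ineq: "\<forall>x. norm (x - ys) < \<delta> \<and> ?f ys < ?f x \<and> ?f x < ?f ys + \<eta>0 \<longrightarrow>
        1 \<le> ereal (\<phi>' (real_of_ereal (?f x - ?f ys))) * (INF p\<in>lim_subdiff ?f x. ereal (norm p))"
    unfolding KL_function_def by blast
  define \<eta> where "\<eta> = (if \<eta>0 = \<infinity> then 1 else real_of_ereal \<eta>0)"
  have \<eta>: "0 < \<eta>" "ereal \<eta> \<le> \<eta>0" using \<eta>0 by (cases \<eta>0; simp add: \<eta>_def)+
  have below: "ereal t < \<eta>0" if "t < \<eta>" for t using that by (auto intro!: less_le_trans[OF _ \<eta>(2)])
  have sub: "{0..<\<eta>} \<subseteq> {t. 0 \<le> t \<and> ereal t < \<eta>0}" using below by auto
  show thesis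
  proof (rule that[of \<eta> \<delta> \<phi> \<phi>'])
    show "continuous_on {0..<\<eta>} \<phi>" using cont sub by (rule continuous_on_subset)
    show "concave_on {0..<\<eta>} \<phi>" using conc sub unfolding concave_on_def by (rule convex_on_subset) simp
    show "t \<in> {0..<\<eta>} \<Longrightarrow> 0 \<le> \<phi> t" for t using nonneg sub by auto
    show "(\<phi> has_real_derivative \<phi>' t) (at t) \<and> 0 < \<phi>' t" if "t \<in> {0<..<\<eta>}" for t
    proof -
      have "0 < t" "ereal t < \<eta>0" using that below by auto
      with der show ?thesis by blast
    qed
    fix z v assume z: "z \<in> C" "norm (z - ys) < \<delta>" "h ys < h z" "h z - h ys < \<eta>"
      and v: "v \<in> lim_subdiff ?f z"
    have fz: "?f z = ereal (h z)" and fys: "?f ys = ereal (h ys)"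
      using z(1) ys by (simp_all add: plus_indicator_def)
    have "ereal (h z - h ys) < \<eta>0" using below[OF z(4)] .
    hence "?f z < ?f ys + \<eta>0" unfolding fz fys by (cases \<eta>0) auto
    hence "1 \<le> ereal (\<phi>' (h z - h ys)) * (INF p\<in>lim_subdiff ?f z. ereal (norm p))"
      using ineq z fz fys by auto
    also have "\<dots> \<le> ereal (\<phi>' (h z - h ys)) * ereal (norm v)"
      using der[rule_format, of "h z - h ys"] below[OF z(4)] z(3) v
      by (intro ereal_mult_left_mono INF_lower) auto
    finally show "1 \<le> \<phi>' (h z - h ys) * norm v" by simp
  qed (use \<eta> \<delta> \<phi>0 in auto)
qed

lemma concave_tangent:
  fixes \<phi> :: "real \<Rightarrow> real"
  assumes "concave_on {0..<\<eta>} \<phi>" "a \<in> {0<..<\<eta>}" "b \<in> {0..<\<eta>}"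
    and "(\<phi> has_real_derivative d) (at a)"
  shows "d * (a - b) \<le> \<phi> a - \<phi> b"
proof -
  have "(- d) * (b - a) \<le> (- \<phi> b) - (- \<phi> a)"
  proof (rule convex_on_imp_above_tangent[where A = "{0..<\<eta>}"])
    show "convex_on {0..<\<eta>} (\<lambda>x. - \<phi> x)" using assms(1) by (simp add: concave_on_def)
    show "((\<lambda>x. - \<phi> x) has_real_derivative - d) (at a within {0..<\<eta>})"
      using DERIV_minus[OF assms(4)] by (rule has_field_derivative_at_within)
  qed (use assms(2,3) in \<open>auto simp: is_interval_connected\<close>)
  thus ?thesis by (simp add: algebra_simps)
qed

lemma two_mul_le_of_sq_le_mul:
  fixes x p q :: real
  assumes "0 \<le> x" "0 \<le> p" "0 \<le> q" "x^2 \<le> p * q"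
  shows "2 * x \<le> p + q"
proof -
  have "(2 * x)^2 \<le> 4 * (p * q)" using assms(4) by (simp add: power2_eq_square)
  also have "\<dots> \<le> (p + q)^2" using sum_squares_ge_zero[of "p - q" 0] by (simp add: power2_eq_square algebra_simps)
  finally show ?thesis using assms(2,3) by (rule power2_le_imp_le[OF _ add_nonneg_nonneg])
qed

text \<open>The arithmetic core of the KL step: from the KL inequality 1 \<le> p b D_{k-1}/mu_{k-1},
  the decrease p c D_k^2/mu_k \<le> a and mu_k \<le> M mu_{k-1} we get D_k^2 \<le> (b M a / c) D_{k-1},
  hence 2 D_k \<le> D_{k-1} + (b M / c) a by AM-GM.\<close>
lemma KL_step_arith:
  fixes p a b c M Dm Dk mu0 mu1 :: real
  assumes p: "0 < p" and KL: "1 \<le> p * (b * Dm / mu0)" and decr: "p * (c * Dk^2 / mu1) \<le> a"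
    and mu: "0 < mu0" "0 < mu1" "mu1 \<le> M * mu0" and M: "0 < M" and c: "0 < c" and b: "0 < b"
    and D: "0 \<le> Dm" "0 \<le> Dk"
  shows "2 * Dk \<le> Dm + (b * M / c) * a"
proof -
  have a0: "0 \<le> a"
    using decr order_trans[OF mult_nonneg_nonneg[of p "c * Dk^2 / mu1"]] p c mu(2) by simp
  have kl: "mu0 \<le> p * b * Dm" using KL mu(1) by (simp add: le_divide_eq)
  have pcD: "p * c * Dk^2 \<le> a * mu1"
    using mult_right_mono[OF decr less_imp_le[OF mu(2)]] mu(2) by simp
  have "c * Dk^2 * mu0 \<le> c * Dk^2 * (p * b * Dm)" using kl c by (intro mult_left_mono) auto
  also have "\<dots> = (p * c * Dk^2) * (b * Dm)" by (simp add: algebra_simps)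
  also have "\<dots> \<le> (a * mu1) * (b * Dm)" using pcD b D by (intro mult_right_mono) auto
  also have "\<dots> \<le> (a * (M * mu0)) * (b * Dm)"
    using a0 mu(3) b D by (intro mult_right_mono mult_left_mono) auto
  finally have "c * Dk^2 * mu0 \<le> (a * M * b * Dm) * mu0" by (simp add: algebra_simps)
  hence "c * Dk^2 \<le> a * M * b * Dm" using mu(1) by simp
  hence "Dk^2 \<le> ((b * M / c) * a) * Dm" using c by (simp add: field_simps)
  hence "2 * Dk \<le> (b * M / c) * a + Dm"
    using D a0 b M c by (intro two_mul_le_of_sq_le_mul) auto
  thus ?thesis by simp
qed

text \<open>With r0 = h(y_k) - h(ys), r1 = h(y_{k+1}) - h(ys)
  and p = \<phi>'(r0), concavity turns the decrease r0 - r1 \<ge> c D_k^2/mu_k into a decrease of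
  \<phi>, giving  2 D_k \<le> D_{k-1} + (b M / c) (\<phi> r0 - \<phi> r1).  If r0 = 0 the KL inequality is not
  available, but then the sequence has stopped: r1 = 0 and D_k = 0.\<close>
lemma KL_step_estimate:
  fixes \<phi> :: "real \<Rightarrow> real"
  assumes conc: "concave_on {0..<\<eta>} \<phi>" and r0: "r0 \<in> {0..<\<eta>}" and r1: "r1 \<in> {0..<\<eta>}"
    and KL: "0 < r0 \<Longrightarrow> (\<phi> has_real_derivative p) (at r0) \<and> 0 < p \<and> 1 \<le> p * (b * Dm / mu0)"
    and desc: "c * Dk^2 / mu1 \<le> r0 - r1"
    and mu: "0 < mu0" "0 < mu1" "mu1 \<le> M * mu0" and M: "0 < M" and c: "0 < c" and b: "0 < b"
    and D: "0 \<le> Dm" "0 \<le> Dk"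
  shows "2 * Dk \<le> Dm + (b * M / c) * (\<phi> r0 - \<phi> r1)"
proof (cases "r0 = 0")
  case True
  have "0 \<le> c * Dk^2 / mu1" using c mu(2) by simp
  with desc True r1 have "r1 = 0" "c * Dk^2 / mu1 \<le> 0" by auto
  moreover from this(2) have "Dk = 0" using c mu(2) by (simp add: divide_le_0_iff mult_le_0_iff)
  ultimately show ?thesis using True D by simp
next
  case False
  with r0 have r0': "r0 \<in> {0<..<\<eta>}" by auto
  with KL have der: "(\<phi> has_real_derivative p) (at r0)" and p: "0 < p" and KLp: "1 \<le> p * (b * Dm / mu0)"
    by auto
  have "p * (c * Dk^2 / mu1) \<le> p * (r0 - r1)" using desc p by (intro mult_left_mono) auto
  also have "\<dots> \<le> \<phi> r0 - \<phi> r1" using concave_tangent[OF conc r0' r1 der] .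
  finally show ?thesis by (rule KL_step_arith[OF p KLp _ mu M c b D])
qed

lemma norm_diff_le_path_length:
  fixes y :: "nat \<Rightarrow> 'a::real_normed_vector"
  shows "norm (y (k + m) - y k) \<le> (\<Sum>j<m. norm (y (Suc (k + j)) - y (k + j)))"
proof (induction m)
  case (Suc m)
  have "norm (y (k + Suc m) - y k) \<le> norm (y (Suc (k + m)) - y (k + m)) + norm (y (k + m) - y k)"
    using norm_triangle_ineq[of "y (Suc (k + m)) - y (k + m)" "y (k + m) - y k"] by simp
  thus ?case using Suc by simp
qed simp

text \<open>The recursion 2 D_k \<le> D_{k-1} + K(\<Phi>_k - \<Phi>_{k+1})
  is only available while y k stays in the \<delta>-ball around ys; if the sequence starts deep
  enough inside, summing the recursion shows that it never leaves the ball (an induction on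
  the number of steps), and the partial sums of D stay bounded by D_{kz-1} + K \<Phi>_kz.\<close>
lemma finite_length_of_KL_recursion:
  fixes y :: "nat \<Rightarrow> 'a::real_normed_vector" and D \<Phi> :: "nat \<Rightarrow> real"
  assumes D: "\<And>k. D k = norm (y (Suc k) - y k)"
    and recursion: "\<And>k. k \<ge> kz \<Longrightarrow> norm (y k - ys) < \<delta> \<Longrightarrow> 2 * D k \<le> D (k - 1) + K * (\<Phi> k - \<Phi> (Suc k))"
    and \<Phi>: "\<And>k. k \<ge> kz \<Longrightarrow> \<Phi> k \<ge> 0" and K: "K \<ge> 0"
    and start: "norm (y kz - ys) + D (kz - 1) + K * \<Phi> kz < \<delta>"
  shows "summable D"
proof -
  have D0: "D k \<ge> 0" for k using D by simp
  have invariant: "norm (y (kz + n) - ys) < \<delta> \<and>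
      (\<Sum>j<Suc n. D (kz + j)) + D (kz + n) \<le> D (kz - 1) + K * (\<Phi> kz - \<Phi> (kz + Suc n))" for n
  proof (induction n)
    case 0
    have "K * \<Phi> kz \<ge> 0" using \<Phi>[of kz] K by simp
    hence "norm (y kz - ys) < \<delta>" using start D0[of "kz - 1"] by linarith
    thus ?case using recursion[of kz] by simp
  next
    case (Suc n)
    have "K * \<Phi> (kz + Suc n) \<ge> 0" using \<Phi>[of "kz + Suc n"] K by simp
    hence partial: "(\<Sum>j<Suc n. D (kz + j)) \<le> D (kz - 1) + K * \<Phi> kz"
      using Suc.IH D0[of "kz + n"] by (simp add: right_diff_distrib)
    have "norm (y (kz + Suc n) - ys) \<le> norm (y (kz + Suc n) - y kz) + norm (y kz - ys)"
      using norm_triangle_ineq[of "y (kz + Suc n) - y kz" "y kz - ys"] by simp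
    also have "norm (y (kz + Suc n) - y kz) \<le> (\<Sum>j<Suc n. D (kz + j))"
      using norm_diff_le_path_length[of y kz "Suc n"] by (simp add: D)
    finally have inside: "norm (y (kz + Suc n) - ys) < \<delta>" using partial start by linarith
    have "2 * D (kz + Suc n) \<le> D (kz + n) + K * (\<Phi> (kz + Suc n) - \<Phi> (Suc (kz + Suc n)))"
      using recursion[of "kz + Suc n"] inside by simp
    thus ?case using Suc inside by (simp add: algebra_simps)
  qed
  have "(\<Sum>j<n. D (j + kz)) \<le> D (kz - 1) + K * \<Phi> kz" for n
  proof (cases n)
    case 0 thus ?thesis using D0[of "kz - 1"] \<Phi>[of kz] K by simp
  next
    case (Suc m)
    have "K * \<Phi> (kz + Suc m) \<ge> 0" using \<Phi>[of "kz + Suc m"] K by simp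
    moreover have "(\<Sum>j<n. D (j + kz)) = (\<Sum>j<Suc m. D (kz + j))" using Suc by (simp add: add.commute)
    ultimately show ?thesis using invariant[of m] D0[of "kz + m"] by (simp add: right_diff_distrib)
  qed
  hence "summable (\<lambda>j. D (j + kz))" using D0 by (intro summableI_nonneg_bounded) auto
  thus ?thesis by simp
qed

text \<open>Finite length around a cluster point: if the KL recursion holds near ys from some index
  on, with potentials \<Phi> tending to 0, then a late index of a subsequence converging to ys is
  a starting point as required by finite_length_of_KL_recursion.\<close>
lemma finite_length_near_cluster_point:
  fixes y :: "nat \<Rightarrow> 'a::real_normed_vector" and D \<Phi> :: "nat \<Rightarrow> real"
  assumes D: "\<And>k. D k = norm (y (Suc k) - y k)"
    and recursion: "\<And>k. k \<ge> k0 \<Longrightarrow> norm (y k - ys) < \<delta> \<Longrightarrow> 2 * D k \<le> D (k - 1) + K * (\<Phi> k - \<Phi> (Suc k))"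
    and \<Phi>: "\<And>k. k \<ge> k0 \<Longrightarrow> \<Phi> k \<ge> 0" and K: "K \<ge> 0" and \<delta>: "\<delta> > 0"
    and Dlim: "D \<longlonglongrightarrow> 0" and \<Phi>lim: "\<Phi> \<longlonglongrightarrow> 0"
    and idx: "strict_mono idx" and yidx: "(\<lambda>n. y (idx n)) \<longlonglongrightarrow> ys"
  shows "summable D"
proof -
  have "\<forall>\<^sub>F n in sequentially. k0 \<le> idx n \<and> norm (y (idx n) - ys) + D (idx n - 1) + K * \<Phi> (idx n) < \<delta>"
  proof (intro eventually_conj)
    show "\<forall>\<^sub>F n in sequentially. k0 \<le> idx n"
      unfolding eventually_sequentially
      by (intro exI[of _ k0] allI impI) (meson seq_suble[OF idx] le_trans)
    have "(\<lambda>n. D (n - 1)) \<longlonglongrightarrow> 0"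
      by (subst filterlim_sequentially_Suc[symmetric]) (simp add: Dlim)
    from LIMSEQ_subseq_LIMSEQ[OF this idx] have "(\<lambda>n. D (idx n - 1)) \<longlonglongrightarrow> 0"
      by (simp add: o_def)
    moreover have "(\<lambda>n. norm (y (idx n) - ys)) \<longlonglongrightarrow> 0"
      using tendsto_norm_zero[OF LIM_zero[OF yidx]] .
    moreover have "(\<lambda>n. K * \<Phi> (idx n)) \<longlonglongrightarrow> 0"
      using tendsto_mult_right_zero[OF LIMSEQ_subseq_LIMSEQ[OF \<Phi>lim idx]] by (simp add: o_def)
    ultimately have "(\<lambda>n. norm (y (idx n) - ys) + D (idx n - 1) + K * \<Phi> (idx n)) \<longlonglongrightarrow> 0 + 0 + 0"
      by (intro tendsto_add)
    thus "\<forall>\<^sub>F n in sequentially. norm (y (idx n) - ys) + D (idx n - 1) + K * \<Phi> (idx n) < \<delta>"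
      using \<delta> by (intro order_tendstoD(2)) auto
  qed
  then obtain n0 where n0: "k0 \<le> idx n0"
      "norm (y (idx n0) - ys) + D (idx n0 - 1) + K * \<Phi> (idx n0) < \<delta>"
    unfolding eventually_sequentially by blast
  show ?thesis
  proof (rule finite_length_of_KL_recursion[where kz = "idx n0" and \<Phi> = \<Phi> and K = K])
    show "2 * D k \<le> D (k - 1) + K * (\<Phi> k - \<Phi> (Suc k))" if "idx n0 \<le> k" "norm (y k - ys) < \<delta>" for k
      using recursion that n0(1) by simp
    show "0 \<le> \<Phi> k" if "idx n0 \<le> k" for k using \<Phi> that n0(1) by simp
  qed (use D K n0(2) in auto)
qed

text \<open>With r k = h(y k) - h ys, which
  decreases to 0, and \<Phi> k = \<phi>(r k), the KL step estimate yields the recursion of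
  finite_length_near_cluster_point whenever y k is near ys.\<close>
lemma KL_finite_length:
  fixes y V :: "nat \<Rightarrow> 'a::real_inner" and D mu :: "nat \<Rightarrow> real"
  assumes KL: "KL_function (plus_indicator h C)" and ysC: "ys \<in> C"
    and crit: "0 \<in> lim_subdiff (plus_indicator h C) ys" and yC: "\<And>k. y k \<in> C"
    and D: "\<And>k. D k = norm (y (Suc k) - y k)"
    and c: "c > 0" and b: "b > 0" and M: "M > 0"
    and mu: "\<And>k. mu k > 0" and ratio: "\<And>k. mu (Suc k) \<le> M * mu k"
    and desc: "\<And>k. h (y (Suc k)) \<le> h (y k) - c * (D k)^2 / mu k"
    and V: "\<And>k. V k \<in> frechet_subdiff (plus_indicator h C) (y (Suc k)) \<and> norm (V k) \<le> b * D k / mu k"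
    and hlim: "(\<lambda>k. h (y k)) \<longlonglongrightarrow> h ys" and hge: "\<And>k. h ys \<le> h (y k)"
    and Dlim: "D \<longlonglongrightarrow> 0" and idx: "strict_mono idx" and yidx: "(\<lambda>n. y (idx n)) \<longlonglongrightarrow> ys"
  shows "summable D"
proof -
  obtain \<eta> \<delta> :: real and \<phi> \<phi>' :: "real \<Rightarrow> real" where \<eta>: "0 < \<eta>" and \<delta>: "0 < \<delta>"
    and cont: "continuous_on {0..<\<eta>} \<phi>" and conc: "concave_on {0..<\<eta>} \<phi>" and \<phi>0: "\<phi> 0 = 0"
    and \<phi>nonneg: "\<And>t. t \<in> {0..<\<eta>} \<Longrightarrow> 0 \<le> \<phi> t"
    and \<phi>der: "\<And>t. t \<in> {0<..<\<eta>} \<Longrightarrow> (\<phi> has_real_derivative \<phi>' t) (at t) \<and> 0 < \<phi>' t"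
    and KLineq: "\<And>z v. z \<in> C \<Longrightarrow> norm (z - ys) < \<delta> \<Longrightarrow> h ys < h z \<Longrightarrow> h z - h ys < \<eta> \<Longrightarrow>
       v \<in> lim_subdiff (plus_indicator h C) z \<Longrightarrow> 1 \<le> \<phi>' (h z - h ys) * norm v"
    by (rule KL_at_point[OF KL ysC]) (use crit in auto)
  define r where "r = (\<lambda>k. h (y k) - h ys)"
  have r0: "0 \<le> r k" for k using hge[of k] by (simp add: r_def)
  have rlim: "r \<longlonglongrightarrow> 0" using tendsto_diff[OF hlim tendsto_const[of "h ys"]] by (simp add: r_def)
  obtain k1 where k1: "\<And>k. k \<ge> k1 \<Longrightarrow> r k < \<eta>"
    using order_tendstoD(2)[OF rlim \<eta>] by (auto simp: eventually_sequentially)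
  define \<Phi> where "\<Phi> = (\<lambda>k. \<phi> (r k))"
  have \<Phi>lim: "\<Phi> \<longlonglongrightarrow> 0"
  proof -
    have "\<forall>\<^sub>F k in sequentially. r k \<in> {0..<\<eta>}"
      unfolding eventually_sequentially using k1 r0 by auto
    then have "(\<lambda>k. \<phi> (r k)) \<longlonglongrightarrow> \<phi> 0"
      using continuous_on_tendsto_compose[OF cont rlim] \<eta> by simp
    thus ?thesis by (simp add: \<Phi>_def \<phi>0)
  qed
  have \<Phi>0: "\<Phi> k \<ge> 0" if "k \<ge> max k1 1" for k using \<phi>nonneg r0[of k] k1[of k] that by (simp add: \<Phi>_def)
  define K where "K = b * M / c"
  have K0: "K \<ge> 0" using b M c by (simp add: K_def)
  have recursion: "2 * D k \<le> D (k - 1) + K * (\<Phi> k - \<Phi> (Suc k))"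
    if k: "k \<ge> max k1 1" and near: "norm (y k - ys) < \<delta>" for k
  proof -
    obtain j where kj: "k = Suc j" using k by (cases k) auto
    have rk: "r k \<in> {0..<\<eta>}" "r (Suc k) \<in> {0..<\<eta>}" using r0 k1 k by auto
    have drop: "c * (D k)^2 / mu k \<le> r k - r (Suc k)" using desc[of k] by (simp add: r_def)
    have KLk: "(\<phi> has_real_derivative \<phi>' (r k)) (at (r k)) \<and> 0 < \<phi>' (r k) \<and>
        1 \<le> \<phi>' (r k) * (b * D j / mu j)" if "0 < r k"
    proof -
      have pos: "r k \<in> {0<..<\<eta>}" using that rk by auto
      have "1 \<le> \<phi>' (r k) * norm (V j)"
        using KLineq[OF yC near _ _ frechet_subdiff_imp_lim_subdiff] V[of j] pos by (simp add: r_def kj)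
      also have "\<dots> \<le> \<phi>' (r k) * (b * D j / mu j)"
        using V[of j] \<phi>der[OF pos] by (intro mult_left_mono) auto
      finally show ?thesis using \<phi>der[OF pos] by simp
    qed
    from KL_step_estimate[OF conc rk KLk drop mu[of j] mu[of k] _ M c b] show ?thesis
      using ratio[of j] D by (simp add: kj K_def \<Phi>_def)
  qed
  show ?thesis
    by (rule finite_length_near_cluster_point[OF D recursion \<Phi>0 K0 \<delta> Dlim \<Phi>lim idx yidx])
qed

section \<open>Abstract convergence theorem\<close>

lemma continuous_bdd_below_on_bounded:
  fixes y :: "nat \<Rightarrow> 'a::euclidean_space" and h :: "'a \<Rightarrow> real"
  assumes hcont: "\<And>z. isCont h z" and bdd: "bounded (range y)"
  shows "bdd_below (range (\<lambda>k. h (y k)))"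
proof -
  have "bounded (h ` closure (range y))"
    using bdd hcont by (intro compact_imp_bounded compact_continuous_image continuous_at_imp_continuous_on)
      (auto simp: compact_closure)
  moreover have "range (\<lambda>k. h (y k)) \<subseteq> h ` closure (range y)"
    using image_mono[OF closure_subset[of "range y"], of h] by (simp add: image_image)
  ultimately show ?thesis by (rule bounded_imp_bdd_below[OF bounded_subset])
qed

text \<open>Subgradients vanishing along a subsequence of a bounded feasible sequence produce a
  critical cluster point: h is continuous, so along the convergent sub-subsequence the
  values of h + \<delta>_C converge as the limiting subdifferential requires.\<close>
lemma critical_cluster_point:
  fixes y V :: "nat \<Rightarrow> 'a::euclidean_space"
  assumes C: "closed C" and hcont: "\<And>z. isCont h z" and bdd: "bounded (range y)"
    and yC: "\<And>k. y k \<in> C"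
    and V: "\<And>k. V k \<in> frechet_subdiff (plus_indicator h C) (y (Suc k))"
    and s: "strict_mono s" and Vs: "(\<lambda>n. V (s n)) \<longlonglongrightarrow> 0"
  obtains idx ys where "strict_mono idx" "(\<lambda>n. y (idx n)) \<longlonglongrightarrow> ys" "ys \<in> C"
    "0 \<in> lim_subdiff (plus_indicator h C) ys"
proof -
  have "bounded (range (\<lambda>n. y (Suc (s n))))" using bdd by (rule bounded_subset) auto
  then obtain ys t where t: "strict_mono t" "((\<lambda>n. y (Suc (s n))) \<circ> t) \<longlonglongrightarrow> ys"
    using bounded_imp_convergent_subsequence by blast
  define idx where "idx n = Suc (s (t n))" for n
  have mono: "strict_mono idx" using s t(1) by (simp add: idx_def strict_mono_def)
  have lim: "(\<lambda>n. y (idx n)) \<longlonglongrightarrow> ys" using t(2) by (simp add: idx_def o_def)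
  have ysC: "ys \<in> C" using C yC lim by (rule closed_sequentially)
  have "0 \<in> lim_subdiff (plus_indicator h C) ys"
    unfolding lim_subdiff_def
  proof (intro CollectI exI conjI allI)
    show "(\<lambda>n. y (idx n)) \<longlonglongrightarrow> ys" by (rule lim)
    show "(\<lambda>n. plus_indicator h C (y (idx n))) \<longlonglongrightarrow> plus_indicator h C ys"
      using isCont_tendsto_compose[OF hcont lim] yC ysC by (simp add: plus_indicator_def tendsto_ereal)
    show "V (s (t n)) \<in> frechet_subdiff (plus_indicator h C) (y (idx n))" for n
      using V by (simp add: idx_def)
    show "(\<lambda>n. V (s (t n))) \<longlonglongrightarrow> 0" using LIMSEQ_subseq_LIMSEQ[OF Vs t(1)] by (simp add: o_def)
  qed
  with mono lim ysC that show thesis by blast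
qed

lemma finite_length_convergent:
  fixes y :: "nat \<Rightarrow> 'a::banach"
  assumes "summable (\<lambda>k. norm (y (Suc k) - y k))"
    and idx: "strict_mono idx" and lim: "(\<lambda>n. y (idx n)) \<longlonglongrightarrow> ys"
  shows "y \<longlonglongrightarrow> ys"
proof -
  have "summable (\<lambda>k. y (Suc k) - y k)" using assms(1) by (rule summable_norm_cancel)
  hence "(\<lambda>n. \<Sum>k<n. y (Suc k) - y k) \<longlonglongrightarrow> (\<Sum>k. y (Suc k) - y k)" by (rule summable_LIMSEQ)
  hence "(\<lambda>n. (y n - y 0) + y 0) \<longlonglongrightarrow> (\<Sum>k. y (Suc k) - y k) + y 0"
    by (intro tendsto_intros) (simp add: sum_lessThan_telescope)
  then have "convergent y" by (auto simp: convergent_def)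
  then obtain yl where yl: "y \<longlonglongrightarrow> yl" by (auto simp: convergent_def)
  have "(\<lambda>n. y (idx n)) \<longlonglongrightarrow> yl" using LIMSEQ_subseq_LIMSEQ[OF yl idx] by (simp add: o_def)
  with lim have "yl = ys" by (rule LIMSEQ_unique[rotated])
  thus ?thesis using yl by simp
qed

theorem descent_sequence_convergence:
  fixes y :: "nat \<Rightarrow> 'a::euclidean_space" and h :: "'a \<Rightarrow> real" and mu :: "nat \<Rightarrow> real"
  assumes C: "closed C" and hcont: "\<And>z. isCont h z" and KL: "KL_function (plus_indicator h C)"
    and bdd: "bounded (range y)" and yC: "\<And>k. y k \<in> C"
    and c: "c > 0" and b: "b > 0"
    and mu: "\<And>k. 0 < mu k" "\<And>k. mu k \<le> lbar" and ratio: "\<And>k. mu (Suc k) \<le> M * mu k"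
    and nsum: "\<not> summable mu"
    and desc: "\<And>k. h (y (Suc k)) \<le> h (y k) - c * (norm (y (Suc k) - y k))^2 / mu k"
    and relerr: "\<And>k. \<exists>v\<in>frechet_subdiff (plus_indicator h C) (y (Suc k)).
                       norm v \<le> b * norm (y (Suc k) - y k) / mu k"
  shows "summable (\<lambda>k. norm (y (Suc k) - y k)) \<and>
         (\<exists>ys. y \<longlonglongrightarrow> ys \<and> 0 \<in> lim_subdiff (plus_indicator h C) ys)"
proof -
  define D where "D k = norm (y (Suc k) - y k)" for k
  obtain V where V: "\<And>k. V k \<in> frechet_subdiff (plus_indicator h C) (y (Suc k)) \<and> norm (V k) \<le> b * D k / mu k"
    using relerr unfolding D_def by metis
  have descD: "h (y (Suc k)) \<le> h (y k) - c * (D k)^2 / mu k" for k using desc by (simp add: D_def)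
  note bdd_h = continuous_bdd_below_on_bounded[OF hcont bdd]
  note decrease = sufficient_decrease_summable[OF descD c mu(1) bdd_h]
  obtain hs where hs: "(\<lambda>k. h (y k)) \<longlonglongrightarrow> hs" "\<And>k. hs \<le> h (y k)"
    using decseq_convergent[OF decrease(1)] bdd_h by (auto simp: bdd_below_def)
  have Dlim: "D \<longlonglongrightarrow> 0" by (rule weighted_steps_vanish[OF decrease(2) mu]) (simp add: D_def)
  obtain s where s: "strict_mono s" "(\<lambda>n. D (s n) / mu (s n)) \<longlonglongrightarrow> 0"
    using step_quotients_subseq_zero[OF decrease(2) mu(1) nsum] by (auto simp: D_def)
  have "(\<lambda>n. V (s n)) \<longlonglongrightarrow> 0"
  proof (rule tendsto_norm_zero_cancel, rule tendsto_sandwich[of "\<lambda>_. 0" _ _ "\<lambda>n. b * (D (s n) / mu (s n))"])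
    show "\<forall>\<^sub>F n in sequentially. norm (V (s n)) \<le> b * (D (s n) / mu (s n))" using V by simp
    show "(\<lambda>n. b * (D (s n) / mu (s n))) \<longlonglongrightarrow> 0" using tendsto_mult_right_zero[OF s(2)] by simp
  qed simp_all
  then obtain idx ys where idx: "strict_mono idx" "(\<lambda>n. y (idx n)) \<longlonglongrightarrow> ys" "ys \<in> C"
    and crit: "0 \<in> lim_subdiff (plus_indicator h C) ys"
    using critical_cluster_point[OF C hcont bdd yC _ s(1)] V by blast
  have "(\<lambda>n. h (y (idx n))) \<longlonglongrightarrow> hs" using LIMSEQ_subseq_LIMSEQ[OF hs(1) idx(1)] by (simp add: o_def)
  then have "hs = h ys" using isCont_tendsto_compose[OF hcont idx(2)] by (rule LIMSEQ_unique)
  have "0 < M * mu 0" using ratio[of 0] mu(1)[of "Suc 0"] by linarith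
  then have M: "M > 0" using mu(1)[of 0] by (rule zero_less_mult_pos2)
  have "summable D"
    by (rule KL_finite_length[OF KL idx(3) crit yC _ c b M mu(1) ratio descD V _ _ Dlim idx(1,2)])
      (use hs \<open>hs = h ys\<close> in \<open>auto simp: D_def\<close>)
  then show ?thesis using finite_length_convergent[OF _ idx(1,2)] crit by (auto simp: D_def[abs_def])
qed

text \<open>The metrics A_k are uniformly bounded (proj_clarke_hessian_bound), so each step
  satisfies sufficient decrease and the relative error bound with constants
  c = (\<epsilon> - L lbar)/2 and b = L lbar + R + \<epsilon>; the abstract theorem applies to the feasible
  sequence x(k+1) with weights lam(k+1).\<close>

theorem mainTheorem15:
  fixes C :: "(real^'n) set" and h :: "real^'n \<Rightarrow> real" and g :: "real^'n \<Rightarrow> real^'n"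
    and L \<epsilon> lbar :: real and x :: "nat \<Rightarrow> real^'n" and H :: "nat \<Rightarrow> real^'n^'n"
    and lam :: "nat \<Rightarrow> real"
  assumes "closed C" and "C \<noteq> {}"
    and grad: "\<And>y. (h has_derivative (\<lambda>v. g y \<bullet> v)) (at y)"
    and "L > 0" and "L-lipschitz_on UNIV g"
    and "KL_function (plus_indicator h C)"
    and "\<epsilon> > 0"
    and "bounded (range x)"
    and Hk: "\<And>k. H k \<in> clarke_hessian g (x k)"
    and step: "\<And>k. x (Suc k) \<in> proj_metric C (proj_psd (H k) + \<epsilon> *\<^sub>R mat 1)
                 (x k - lam k *\<^sub>R (matrix_inv (proj_psd (H k) + \<epsilon> *\<^sub>R mat 1) *v g (x k)))"
    and "\<And>k. 0 < lam k" and "\<And>k. lam k \<le> lbar" and "lbar < \<epsilon> / L"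
    and "\<not> summable lam"
    and "bdd_above (range (\<lambda>k. lam (Suc k) / lam k))"
  shows "summable (\<lambda>k. norm (x (Suc k) - x k)) \<and>
         (\<exists>xs. x \<longlonglongrightarrow> xs \<and> 0 \<in> lim_subdiff (plus_indicator h C) xs)"
proof -
  note closedC = assms(1) and L = assms(4) and lip = assms(5) and KL = assms(6) and eps = assms(7)
    and bdd = assms(8) and lam = assms(11,12) and lbar = assms(13) and nsum = assms(14)
    and ratio = assms(15)
  obtain R where R: "R \<ge> 0" "\<And>z H u. H \<in> clarke_hessian g z \<Longrightarrow> norm (proj_psd H *v u) \<le> R * norm u"
    using proj_clarke_hessian_bound[OF lip] L by auto
  note one_step = prox_step_uniform[OF grad lip less_imp_le[OF L] proj_psd_in eps lam R(2)[OF Hk] R(1) step]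
  obtain M where M: "\<And>k. lam (Suc k) / lam k \<le> M" using ratio by (auto simp: bdd_above_def)
  have c: "0 < (\<epsilon> - L * lbar) / 2" using lbar L by (simp add: field_simps)
  have b: "0 < L * lbar + R + \<epsilon>" using lam[of 0] L R(1) eps by (simp add: add_pos_nonneg)
  have "summable (\<lambda>k. norm (x (Suc (Suc k)) - x (Suc k))) \<and>
      (\<exists>xs. (\<lambda>k. x (Suc k)) \<longlonglongrightarrow> xs \<and> 0 \<in> lim_subdiff (plus_indicator h C) xs)"
  proof (rule descent_sequence_convergence[where y = "\<lambda>k. x (Suc k)" and mu = "\<lambda>k. lam (Suc k)"
        and lbar = lbar and M = M, OF closedC _ KL _ _ c b])
    show "isCont h z" for z using grad by (rule has_derivative_continuous)
    show "bounded (range (\<lambda>k. x (Suc k)))" using bdd by (rule bounded_subset) auto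
    show "lam (Suc (Suc k)) \<le> M * lam (Suc k)" for k
      using M[of "Suc k"] lam(1)[of "Suc k"] by (simp add: pos_divide_le_eq)
    show "\<not> summable (\<lambda>k. lam (Suc k))" using nsum by (simp add: summable_Suc_iff)
  qed (use lam one_step in auto)
  then show ?thesis
    using summable_Suc_iff[of "\<lambda>k. norm (x (Suc k) - x k)"] by (simp add: filterlim_sequentially_Suc)
qed

end
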